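(* For each $d\in\mathbb Z$ there is a sequence of inclusions of PROPs $$\mathcal{DG}_1^\bullet\hookrightarrow\mathcal{DG}_2^\bullet\hookrightarrow\mathcal{DG}_3^\bullet\hookrightarrow\cdots\hookrightarrow\mathcal{DG}_\infty^\bullet.$$
   Context: $\mathcal{DG}_\infty^\bullet$ (depending on an integer $d$) is the graded vector space generated by pairs $(\gamma,\mathcal O)$, with $(\gamma,-\mathcal O)=-(\gamma,\mathcal O)$, where $\gamma$ is a finite directed graph with a cyclic ordering of the edges at each vertex; a vertex with $n$ outgoing edges is of type $n$; type $1$ vertices have at least two incoming edges; $\mathcal O$ is an orientation of the graded vector space spanned by the edges (degree $1$) and the vertices of type $n\ne0$ (degree $n(2-d)+(d-4)$). Inputs are the type $0$ vertices, outputs are the boundary components of the ribbon-graph thickening of $\gamma$; both are enumerated and there is at least one output. Grading: a nontrivial type $0$ vertex with $m$ incoming edges contributes $m-1$, a type $n\ge1$ vertex with $m$ incoming edges contributes $2n+m-2$. Differential: sum over all admissible graphs with the same number of type $0$ vertices which collapse along one edge to the given graph, oriented by replacing the expanded vertex (moved to the front of $\mathcal O$) by the new edge followed by the two new vertices in the order of the edge's direction. Composition: outputs of the first graph are identified with inputs of the second, and the edges at each input vertex of the second graph are attached to the corresponding output boundary cycle of the first graph in all possible ways compatible with cyclic orders; orientations are concatenated. This is a PROP. For $k=1,2,3,\dots$, $\mathcal{DG}_k^\bullet\subset\mathcal{DG}_\infty^\bullet$ is the subspace spanned by graphs all of whose vertices have type $\le k$. *)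

theory Defs
  imports Main "HOL-Library.Extended_Nat"
begin

section \<open>Directed ribbon graphs with enumerated inputs and outputs\<close>

text \<open>A half-edge (dart) is a pair (e, b):
  b = True is the tail end of e (at its source), b = False is the head end (at its target).
  The cyclic ordering of the (half-)edges at every vertex is given by the permutation rot
  (successor in the cyclic order). Boundary components of the ribbon-graph thickening are
  the orbits of the map h \<mapsto> rot (flip h) on darts, plus one component for each isolated
  vertex. The inputs are the type 0 vertices, enumerated by inp; the outputs are the boundary
  components, enumerated by outp. All data is extensional (fixed default values outside
  the relevant carriers), so that concrete graphs are determined by their structure.\<close>

type_synonym dart = "nat \<times> bool"

datatype bcomp = Cyc "dart set" | Iso nat

datatype gen = GE nat | GV nat

record rgraph =
  V :: "nat set"
  E :: "nat set"
  src :: "nat \<Rightarrow> nat"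
  tgt :: "nat \<Rightarrow> nat"
  rot :: "dart \<Rightarrow> dart"
  inp :: "nat \<Rightarrow> nat"
  outp :: "bcomp \<Rightarrow> nat"

definition darts :: "rgraph \<Rightarrow> dart set" where
  "darts G = E G \<times> UNIV"

definition dv :: "rgraph \<Rightarrow> dart \<Rightarrow> nat" where
  "dv G h = (if snd h then src G (fst h) else tgt G (fst h))"

definition flip :: "dart \<Rightarrow> dart" where
  "flip h = (fst h, \<not> snd h)"

definition outdeg :: "rgraph \<Rightarrow> nat \<Rightarrow> nat" where
  "outdeg G v = card {e \<in> E G. src G e = v}"

definition indeg :: "rgraph \<Rightarrow> nat \<Rightarrow> nat" where
  "indeg G v = card {e \<in> E G. tgt G e = v}"

text \<open>type of a vertex = number of outgoing edges; inputs = type 0 vertices\<close>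
definition inputs :: "rgraph \<Rightarrow> nat set" where
  "inputs G = {v \<in> V G. outdeg G v = 0}"

definition bphi :: "rgraph \<Rightarrow> dart \<Rightarrow> dart" where
  "bphi G h = rot G (flip h)"

definition orbit :: "('a \<Rightarrow> 'a) \<Rightarrow> 'a \<Rightarrow> 'a set" where
  "orbit f x = {(f ^^ n) x | n. True}"

definition bcs :: "rgraph \<Rightarrow> bcomp set" where
  "bcs G = {Cyc (orbit (bphi G) h) | h. h \<in> darts G}
         \<union> {Iso v | v. v \<in> V G \<and> (\<forall>h\<in>darts G. dv G h \<noteq> v)}"

definition wf_graph :: "rgraph \<Rightarrow> bool" where
  "wf_graph G \<longleftrightarrow>
     finite (V G) \<and> finite (E G) \<and>
     (\<forall>e\<in>E G. src G e \<in> V G \<and> tgt G e \<in> V G) \<and>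
     (\<forall>e. e \<notin> E G \<longrightarrow> src G e = 0 \<and> tgt G e = 0) \<and>
     bij_betw (rot G) (darts G) (darts G) \<and>
     (\<forall>h. h \<notin> darts G \<longrightarrow> rot G h = h) \<and>
     (\<forall>h\<in>darts G. dv G (rot G h) = dv G h) \<and>
     (\<forall>h\<in>darts G. \<forall>h'\<in>darts G. dv G h = dv G h' \<longrightarrow> (\<exists>n. (rot G ^^ n) h = h')) \<and>
     (\<forall>v\<in>V G. outdeg G v = 1 \<longrightarrow> indeg G v \<ge> 2) \<and>
     bij_betw (inp G) (inputs G) {..<card (inputs G)} \<and>
     (\<forall>v. v \<notin> inputs G \<longrightarrow> inp G v = 0) \<and>
     bcs G \<noteq> {} \<and>
     bij_betw (outp G) (bcs G) {..<card (bcs G)} \<and>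
     (\<forall>b. b \<notin> bcs G \<longrightarrow> outp G b = 0)"

section \<open>Orientations\<close>

text \<open>Generators of the graded vector space to be oriented: edges (degree 1) and
  vertices of type n \<noteq> 0 (degree n(2-d)+(d-4)). An orientation is represented by an ordering
  of these generators; reorderings change the orientation by the Koszul sign.\<close>

definition ogens :: "rgraph \<Rightarrow> gen set" where
  "ogens G = GE ` E G \<union> GV ` {v \<in> V G. outdeg G v \<noteq> 0}"

definition wf_or :: "rgraph \<Rightarrow> gen list \<Rightarrow> bool" where
  "wf_or G Or \<longleftrightarrow> distinct Or \<and> set Or = ogens G"

fun gdeg :: "int \<Rightarrow> rgraph \<Rightarrow> gen \<Rightarrow> int" where
  "gdeg d G (GE e) = 1"
| "gdeg d G (GV v) = int (outdeg G v) * (2 - d) + (d - 4)"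

type_synonym ograph = "rgraph \<times> gen list"

definition wf_og :: "int \<Rightarrow> ograph \<Rightarrow> bool" where
  "wf_og d x \<longleftrightarrow> wf_graph (fst x) \<and> wf_or (fst x) (snd x)"

definition before :: "'a list \<Rightarrow> 'a \<Rightarrow> 'a \<Rightarrow> bool" where
  "before xs a b \<longleftrightarrow> (\<exists>i j. i < j \<and> j < length xs \<and> xs ! i = a \<and> xs ! j = b)"

text \<open>Koszul sign exponent relating two orderings Or, Or' of the same generators:
  number of pairs of odd-degree generators whose relative order is swapped.\<close>
definition kinv :: "int \<Rightarrow> rgraph \<Rightarrow> gen list \<Rightarrow> gen list \<Rightarrow> nat" where
  "kinv d G Or Or' = card {(a, b). a \<in> set Or \<and> b \<in> set Or \<and> odd (gdeg d G a) \<and> odd (gdeg d G b)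
                                 \<and> before Or a b \<and> before Or' b a}"

section \<open>The free vector space and the relations\<close>

definition delta :: "'a \<Rightarrow> 'a \<Rightarrow> 'k::field" where
  "delta x = (\<lambda>y. if y = x then 1 else 0)"

definition lin_span :: "('a \<Rightarrow> 'k::field) set \<Rightarrow> ('a \<Rightarrow> 'k) set" where
  "lin_span S = {f. \<exists>T c. finite T \<and> T \<subseteq> S \<and> f = (\<lambda>y. \<Sum>g\<in>T. c g * g y)}"

definition gmap :: "(nat \<Rightarrow> nat) \<Rightarrow> (nat \<Rightarrow> nat) \<Rightarrow> gen \<Rightarrow> gen" where
  "gmap fv fe g = (case g of GE e \<Rightarrow> GE (fe e) | GV v \<Rightarrow> GV (fv v))"

definition dmap :: "(nat \<Rightarrow> nat) \<Rightarrow> dart \<Rightarrow> dart" where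
  "dmap fe h = (fe (fst h), snd h)"

fun bmap :: "(nat \<Rightarrow> nat) \<Rightarrow> (nat \<Rightarrow> nat) \<Rightarrow> bcomp \<Rightarrow> bcomp" where
  "bmap fv fe (Cyc C) = Cyc (dmap fe ` C)"
| "bmap fv fe (Iso v) = Iso (fv v)"

definition giso :: "rgraph \<Rightarrow> rgraph \<Rightarrow> (nat \<Rightarrow> nat) \<Rightarrow> (nat \<Rightarrow> nat) \<Rightarrow> bool" where
  "giso G G' fv fe \<longleftrightarrow>
     bij_betw fv (V G) (V G') \<and> bij_betw fe (E G) (E G') \<and>
     (\<forall>e\<in>E G. src G' (fe e) = fv (src G e) \<and> tgt G' (fe e) = fv (tgt G e)) \<and>
     (\<forall>h\<in>darts G. rot G' (dmap fe h) = dmap fe (rot G h)) \<and>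
     (\<forall>v\<in>inputs G. inp G' (fv v) = inp G v) \<and>
     (\<forall>b\<in>bcs G. outp G' (bmap fv fe b) = outp G b)"

text \<open>Relations: (\<gamma>, Or') = (Koszul sign) (\<gamma>, Or), and isomorphic oriented graphs are identified.\<close>
definition Rel :: "int \<Rightarrow> (ograph \<Rightarrow> 'k::field) set" where
  "Rel d = {(\<lambda>y. delta (G, Or') y - (-1) ^ kinv d G Or Or' * delta (G, Or) y) | G Or Or'.
              wf_og d (G, Or) \<and> wf_or G Or'}
         \<union> {(\<lambda>y. delta (G', map (gmap fv fe) Or) y - delta (G, Or) y) | G G' Or fv fe.
              wf_og d (G, Or) \<and> wf_graph G' \<and> giso G G' fv fe}"

definition typebound :: "enat \<Rightarrow> ograph \<Rightarrow> bool" where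
  "typebound k x \<longleftrightarrow> (\<forall>v\<in>V (fst x). enat (outdeg (fst x) v) \<le> k)"

text \<open>DGk d k is the preimage in the free vector space on oriented graphs of the subspace
  \<open>DG_k\<close> of \<open>DG_\<infinity>\<close> = free space / relations. For k = \<infinity> it is the whole of \<open>DG_\<infinity>\<close>.\<close>
definition DGk :: "int \<Rightarrow> enat \<Rightarrow> (ograph \<Rightarrow> 'k::field) set" where
  "DGk d k = lin_span ({delta x | x. wf_og d x \<and> typebound k x} \<union> Rel d)"

section \<open>The differential\<close>

definition freshn :: "nat set \<Rightarrow> nat" where
  "freshn S = Suc (Max (insert 0 S))"

definition vdarts :: "rgraph \<Rightarrow> nat \<Rightarrow> dart set" where
  "vdarts G v = {h \<in> darts G. dv G h = v}"

text \<open>Expansion of the vertex v = dv G h0: writing h_i = rot^i h0 for the darts at v in their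
  cyclic order (i < r), the darts h_0..h_(l-1) go to the new vertex a, the others to the new
  vertex b, and a new edge a \<rightarrow> b is inserted (its tail after h_(l-1) at a, its head after
  h_(r-1) at b). Every expansion of a vertex with respect to the cyclic structure arises for
  exactly one pair (h0, l) with 0 \<le> l \<le> r.\<close>
definition expand_graph :: "rgraph \<Rightarrow> dart \<Rightarrow> nat \<Rightarrow> rgraph" where
  "expand_graph G h0 l =
    (let v = dv G h0; r = card (vdarts G v); hs = (\<lambda>i. (rot G ^^ i) h0);
         I = {hs i | i. i < l}; e0 = freshn (E G); a = freshn (V G); b = Suc (freshn (V G));
         V' = (V G - {v}) \<union> {a, b}; E' = insert e0 (E G);
         src' = (\<lambda>e. if e = e0 then a else if e \<in> E G then
                     (if src G e = v then (if (e, True) \<in> I then a else b) else src G e) else 0);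
         tgt' = (\<lambda>e. if e = e0 then b else if e \<in> E G then
                     (if tgt G e = v then (if (e, False) \<in> I then a else b) else tgt G e) else 0);
         rot' = (\<lambda>h. if h = (e0, True) then (if l = 0 then (e0, True) else h0)
                   else if h = (e0, False) then (if l = r then (e0, False) else hs l)
                   else if h \<in> darts G then
                     (if dv G h = v \<and> 0 < l \<and> h = hs (l - 1) then (e0, True)
                      else if dv G h = v \<and> l < r \<and> h = hs (r - 1) then (e0, False)
                      else rot G h)
                   else h);
         G0 = \<lparr>V = V', E = E', src = src', tgt = tgt', rot = rot', inp = (\<lambda>_. 0), outp = (\<lambda>_. 0)\<rparr>;
         inp' = (\<lambda>w. if w \<in> inputs G0 then (if w \<in> V G - {v} then inp G w else inp G v) else 0);
         outp' = (\<lambda>c. if c \<in> bcs G0 then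
                    (case c of Cyc C \<Rightarrow> outp G (Cyc (orbit (bphi G) (SOME h. h \<in> C \<inter> darts G)))
                             | Iso w \<Rightarrow> outp G (Iso w))
                    else 0)
     in G0\<lparr>inp := inp', outp := outp'\<rparr>)"

text \<open>Orientation of the expansion: move the expanded vertex to the front (Koszul sign) and
  replace it by the new edge followed by the new vertices (source first), omitting a new
  vertex that is of type 0 (type 0 vertices are not oriented).\<close>
definition expand_or :: "rgraph \<Rightarrow> gen list \<Rightarrow> dart \<Rightarrow> nat \<Rightarrow> gen list" where
  "expand_or G Or h0 l =
    (let G' = expand_graph G h0 l; a = freshn (V G); b = Suc (freshn (V G)) in
      GE (freshn (E G)) # [GV w. w \<leftarrow> [a, b], outdeg G' w \<noteq> 0] @ removeAll (GV (dv G h0)) Or)"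

definition expand_sign_exp :: "int \<Rightarrow> rgraph \<Rightarrow> gen list \<Rightarrow> nat \<Rightarrow> nat" where
  "expand_sign_exp d G Or v =
    (if GV v \<in> set Or \<and> odd (gdeg d G (GV v))
     then card {g \<in> set Or. odd (gdeg d G g) \<and> before Or g (GV v)} else 0)"

definition admissible_exp :: "int \<Rightarrow> rgraph \<Rightarrow> gen list \<Rightarrow> dart \<Rightarrow> nat \<Rightarrow> bool" where
  "admissible_exp d G Or h0 l \<longleftrightarrow>
     wf_og d (expand_graph G h0 l, expand_or G Or h0 l) \<and>
     card (inputs (expand_graph G h0 l)) = card (inputs G)"

definition dbasis :: "int \<Rightarrow> ograph \<Rightarrow> ograph \<Rightarrow> 'k::field" where
  "dbasis d x = (\<lambda>y. \<Sum>p\<in>{(h0, l). h0 \<in> darts (fst x) \<and> l \<le> card (vdarts (fst x) (dv (fst x) h0))}.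
      if admissible_exp d (fst x) (snd x) (fst p) (snd p)
      then (-1) ^ expand_sign_exp d (fst x) (snd x) (dv (fst x) (fst p))
           * delta (expand_graph (fst x) (fst p) (snd p), expand_or (fst x) (snd x) (fst p) (snd p)) y
      else 0)"

section \<open>Vertical composition\<close>

definition shd :: "nat \<Rightarrow> dart \<Rightarrow> dart" where
  "shd s h = (fst h + s, snd h)"

definition shgen :: "nat \<Rightarrow> nat \<Rightarrow> gen \<Rightarrow> gen" where
  "shgen sv se g = gmap (\<lambda>w. w + sv) (\<lambda>e. e + se) g"

text \<open>G is one of the graphs obtained by gluing G2 on top of G1: the edges at the input
  vertex number j of G2 are attached to the output boundary cycle number j of G1, inserted into
  corners of that boundary cycle, so that their order along the boundary cycle is the cyclic
  order at the input vertex.\<close>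
definition vcomp_graph :: "rgraph \<Rightarrow> rgraph \<Rightarrow> rgraph \<Rightarrow> bool" where
  "vcomp_graph G1 G2 G \<longleftrightarrow>
    (let sv = freshn (V G1); se = freshn (E G1);
         A = {shd se y | y. y \<in> darts G2 \<and> dv G2 y \<in> inputs G2};
         W = (\<lambda>h. if h \<in> A then rot G h else rot G (flip h)) in
     card (bcs G1) = card (inputs G2) \<and>
     V G = V G1 \<union> (\<lambda>w. w + sv) ` (V G2 - inputs G2) \<and>
     E G = E G1 \<union> (\<lambda>e. e + se) ` E G2 \<and>
     (\<forall>e\<in>E G1. src G e = src G1 e \<and> tgt G e = tgt G1 e) \<and>
     (\<forall>e\<in>E G2. src G (e + se) = src G2 e + sv) \<and>
     (\<forall>e\<in>E G2. tgt G2 e \<notin> inputs G2 \<longrightarrow> tgt G (e + se) = tgt G2 e + sv) \<and>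
     (\<forall>e. e \<notin> E G \<longrightarrow> src G e = 0 \<and> tgt G e = 0) \<and>
     bij_betw (rot G) (darts G) (darts G) \<and>
     (\<forall>h. h \<notin> darts G \<longrightarrow> rot G h = h) \<and>
     (\<forall>h\<in>darts G. dv G (rot G h) = dv G h) \<and>
     (\<forall>y\<in>darts G2. dv G2 y \<notin> inputs G2 \<longrightarrow> rot G (shd se y) = shd se (rot G2 y)) \<and>
     (\<forall>z\<in>darts G1. \<exists>n. (rot G ^^ Suc n) z = rot G1 z \<and> (\<forall>m<n. (rot G ^^ Suc m) z \<in> A)) \<and>
     (\<forall>y\<in>darts G2. dv G2 y \<in> inputs G2 \<longrightarrow>
        (\<exists>n. (W ^^ Suc n) (shd se y) = shd se (rot G2 y) \<and> (\<forall>m<n. (W ^^ Suc m) (shd se y) \<notin> A)) \<and>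
        ((\<exists>z\<in>darts G1. outp G1 (Cyc (orbit (bphi G1) z)) = inp G2 (dv G2 y) \<and>
                        (\<exists>n. (W ^^ n) z = shd se y)) \<or>
         (\<exists>w. Iso w \<in> bcs G1 \<and> outp G1 (Iso w) = inp G2 (dv G2 y) \<and> dv G (shd se y) = w))) \<and>
     inp G = inp G1 \<and>
     (\<forall>c. outp G c =
        (if c \<in> bcs G then
          (case c of
             Cyc C \<Rightarrow>
               (if \<exists>y\<in>darts G2. shd se y \<in> C
                then outp G2 (Cyc (orbit (bphi G2) (SOME y. y \<in> darts G2 \<and> shd se y \<in> C)))
                else outp G2 (Iso (the_inv_into (inputs G2) (inp G2)
                        (outp G1 (Cyc (orbit (bphi G1) (SOME z. z \<in> C)))))))
           | Iso w \<Rightarrow> outp G2 (Iso (the_inv_into (inputs G2) (inp G2) (outp G1 (Iso w)))))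
         else 0)))"

definition vcomp :: "ograph \<Rightarrow> ograph \<Rightarrow> ograph \<Rightarrow> 'k::field" where
  "vcomp x1 x2 = (\<lambda>y. if vcomp_graph (fst x1) (fst x2) (fst y) \<and>
       snd y = snd x1 @ map (shgen (freshn (V (fst x1))) (freshn (E (fst x1)))) (snd x2)
     then 1 else 0)"

section \<open>Horizontal composition, symmetric group actions, identity\<close>

definition hcomp_graph :: "rgraph \<Rightarrow> rgraph \<Rightarrow> rgraph" where
  "hcomp_graph G1 G2 =
    (let sv = freshn (V G1); se = freshn (E G1);
         G0 = \<lparr>V = V G1 \<union> (\<lambda>w. w + sv) ` V G2,
               E = E G1 \<union> (\<lambda>e. e + se) ` E G2,
               src = (\<lambda>e. if e \<in> E G1 then src G1 e else if e \<ge> se \<and> e - se \<in> E G2 then src G2 (e - se) + sv else 0),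
               tgt = (\<lambda>e. if e \<in> E G1 then tgt G1 e else if e \<ge> se \<and> e - se \<in> E G2 then tgt G2 (e - se) + sv else 0),
               rot = (\<lambda>h. if h \<in> darts G1 then rot G1 h
                          else if fst h \<ge> se \<and> (fst h - se, snd h) \<in> darts G2
                          then shd se (rot G2 (fst h - se, snd h)) else h),
               inp = (\<lambda>_. 0), outp = (\<lambda>_. 0)\<rparr>
     in G0\<lparr>inp := (\<lambda>w. if w \<in> inputs G1 then inp G1 w
                       else if w \<ge> sv \<and> w - sv \<in> inputs G2 then inp G2 (w - sv) + card (inputs G1)
                       else 0),
           outp := (\<lambda>c. if c \<in> bcs G0 then
                     (case c of
                        Cyc C \<Rightarrow> (if C \<subseteq> darts G1 then outp G1 (Cyc C)
                                  else outp G2 (Cyc ((\<lambda>h. (fst h - se, snd h)) ` C)) + card (bcs G1))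
                      | Iso w \<Rightarrow> (if w \<in> V G1 then outp G1 (Iso w)
                                  else outp G2 (Iso (w - sv)) + card (bcs G1)))
                     else 0)\<rparr>)"

definition hcomp :: "ograph \<Rightarrow> ograph \<Rightarrow> ograph" where
  "hcomp x1 x2 = (hcomp_graph (fst x1) (fst x2),
      snd x1 @ map (shgen (freshn (V (fst x1))) (freshn (E (fst x1)))) (snd x2))"

definition relabel :: "(nat \<Rightarrow> nat) \<Rightarrow> (nat \<Rightarrow> nat) \<Rightarrow> ograph \<Rightarrow> ograph" where
  "relabel \<sigma> \<tau> x = ((fst x)\<lparr>inp := (\<lambda>v. if v \<in> inputs (fst x) then \<sigma> (inp (fst x) v) else 0),
                             outp := (\<lambda>c. if c \<in> bcs (fst x) then \<tau> (outp (fst x) c) else 0)\<rparr>,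
                      snd x)"

definition idgraph :: ograph where
  "idgraph = (\<lparr>V = {0}, E = {}, src = (\<lambda>_. 0), tgt = (\<lambda>_. 0), rot = (\<lambda>h. h),
               inp = (\<lambda>_. 0), outp = (\<lambda>_. 0)\<rparr>, [])"

end

theory Submission
  imports Defs
begin

text \<open>\<open>DG_k\<close> is spanned by the relations together with the oriented graphs all of whose vertices
  have type at most k, so the inclusions are inclusions of spanning sets. What makes \<open>DG_k\<close> a
  sub-PROP is that none of the structure maps raises the type of a vertex. Relabelling inputs and
  outputs does not touch vertices, and gluing graphs along inputs keeps the outgoing edges of every
  surviving vertex. Expanding a vertex v of type n along a new edge \<open>a \<rightarrow> b\<close> distributes the n
  outgoing edges of v among a and b and gives a one more; since an admissible expansion creates no
  new input, b keeps an outgoing edge when n > 0, so a and b have type at most max 1 n. For the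
  compositions, membership in \<open>DG_\<infinity>\<close> forces the support to be finite and to consist of well
  formed graphs, and such a function supported on graphs of type at most k lies in \<open>DG_k\<close>.\<close>

subsection \<open>Linear spans\<close>

lemma lin_span_mono: "S \<subseteq> S' \<Longrightarrow> lin_span S \<subseteq> lin_span S'"
  unfolding lin_span_def by blast

lemma lin_span_zero: "(\<lambda>y. 0) \<in> lin_span S"
  unfolding lin_span_def by (intro CollectI exI[of _ "{}"]) auto

lemma lin_span_base: "g \<in> S \<Longrightarrow> g \<in> lin_span S"
  unfolding lin_span_def by (intro CollectI exI[of _ "{g}"] exI[of _ "\<lambda>_. 1"]) auto

lemma lin_span_add:
  assumes "f1 \<in> lin_span S" "f2 \<in> lin_span S"
  shows "(\<lambda>y. f1 y + f2 y) \<in> lin_span S"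
proof -
  obtain T1 c1 where T1: "finite T1" "T1 \<subseteq> S" "f1 = (\<lambda>y. \<Sum>g\<in>T1. c1 g * g y)"
    using assms(1) unfolding lin_span_def by blast
  obtain T2 c2 where T2: "finite T2" "T2 \<subseteq> S" "f2 = (\<lambda>y. \<Sum>g\<in>T2. c2 g * g y)"
    using assms(2) unfolding lin_span_def by blast
  define c where "c g = (if g \<in> T1 then c1 g else 0) + (if g \<in> T2 then c2 g else 0)" for g
  have "f1 y + f2 y = (\<Sum>g\<in>T1 \<union> T2. c g * g y)" for y
  proof -
    have fin: "finite (T1 \<union> T2)" using T1 T2 by simp
    have "(\<Sum>g\<in>T1 \<union> T2. c g * g y) = (\<Sum>g\<in>T1 \<union> T2. if g \<in> T1 then c1 g * g y else 0)
           + (\<Sum>g\<in>T1 \<union> T2. if g \<in> T2 then c2 g * g y else 0)"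
      unfolding sum.distrib[symmetric] by (rule sum.cong) (auto simp: c_def distrib_right)
    also have "\<dots> = f1 y + f2 y"
      using sum.inter_restrict[OF fin, of "\<lambda>g. c1 g * g y" T1]
        sum.inter_restrict[OF fin, of "\<lambda>g. c2 g * g y" T2] T1 T2
      by (simp add: Int_absorb1 Int_commute)
    finally show ?thesis by simp
  qed
  then show ?thesis
    unfolding lin_span_def using T1 T2 by (intro CollectI exI[of _ "T1 \<union> T2"] exI[of _ c]) auto
qed

lemma lin_span_smult:
  assumes "f \<in> lin_span S"
  shows "(\<lambda>y. a * f y) \<in> lin_span S"
proof -
  obtain T c where T: "finite T" "T \<subseteq> S" "f = (\<lambda>y. \<Sum>g\<in>T. c g * g y)"
    using assms unfolding lin_span_def by blast
  have "(\<lambda>y. a * f y) = (\<lambda>y. \<Sum>g\<in>T. (a * c g) * g y)"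
    unfolding T(3) sum_distrib_left by (simp only: mult.assoc)
  then show ?thesis
    unfolding lin_span_def using T by (intro CollectI exI[of _ T] exI[of _ "\<lambda>g. a * c g"]) auto
qed

lemma lin_span_sum:
  assumes "finite T" "\<forall>g\<in>T. h g \<in> lin_span S"
  shows "(\<lambda>y. \<Sum>g\<in>T. c g * h g y) \<in> lin_span S"
  using assms
proof (induction T rule: finite_induct)
  case empty
  then show ?case using lin_span_zero by simp
next
  case (insert g T)
  have "(\<lambda>y. c g * h g y + (\<Sum>g\<in>T. c g * h g y)) \<in> lin_span S"
    using insert lin_span_smult lin_span_add by fastforce
  then show ?case using insert by simp
qed

lemma
  assumes "wf_graph G"
  shows wf_graph_finite_V: "finite (V G)"
    and wf_graph_finite_E: "finite (E G)"
    and wf_graph_src_in_V: "\<forall>e\<in>E G. src G e \<in> V G"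
  using assms unfolding wf_graph_def by auto

lemma dv_in_V: "wf_graph G \<Longrightarrow> h \<in> darts G \<Longrightarrow> dv G h \<in> V G"
  unfolding wf_graph_def darts_def dv_def by auto

lemma freshn_gt: "finite S \<Longrightarrow> x \<in> S \<Longrightarrow> x < freshn S"
  unfolding freshn_def by (simp add: le_imp_less_Suc)

lemma freshn_notin: "finite S \<Longrightarrow> freshn S \<notin> S"
  using freshn_gt by blast

subsection \<open>Gluing preserves vertex types\<close>

context
  fixes G G1 G2 :: rgraph and se :: nat
  assumes finite_V1: "finite (V G1)"
    and src1: "\<forall>e\<in>E G1. src G1 e \<in> V G1"
    and edges: "E G = E G1 \<union> (\<lambda>e. e + se) ` E G2"
    and src_left: "\<forall>e\<in>E G1. src G e = src G1 e"
    and src_right: "\<forall>e\<in>E G2. src G (e + se) = src G2 e + freshn (V G1)"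
begin

lemma outdeg_glue_left:
  assumes "v \<in> V G1"
  shows "outdeg G v = outdeg G1 v"
proof -
  have "v < freshn (V G1)" using freshn_gt[OF finite_V1 assms] .
  then have "{e \<in> E G. src G e = v} = {e \<in> E G1. src G1 e = v}"
    using edges src_left src_right by force
  then show ?thesis unfolding outdeg_def by simp
qed

lemma outdeg_glue_right: "outdeg G (w + freshn (V G1)) = outdeg G2 w"
proof -
  have "{e \<in> E G. src G e = w + freshn (V G1)} = (\<lambda>e. e + se) ` {e \<in> E G2. src G2 e = w}"
  proof (intro equalityI subsetI)
    fix e assume e: "e \<in> {e \<in> E G. src G e = w + freshn (V G1)}"
    show "e \<in> (\<lambda>e. e + se) ` {e \<in> E G2. src G2 e = w}"
    proof (cases "e \<in> E G1")
      case True
      then have "src G e < freshn (V G1)" using src1 src_left freshn_gt[OF finite_V1] by simp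
      then show ?thesis using e by simp
    next
      case False
      then show ?thesis using e edges src_right by auto
    qed
  qed (use edges src_right in auto)
  then show ?thesis unfolding outdeg_def by (simp add: card_image)
qed

lemma typebound_glue:
  assumes "V G \<subseteq> V G1 \<union> (\<lambda>w. w + freshn (V G1)) ` V G2"
    and "\<forall>v\<in>V G1. enat (outdeg G1 v) \<le> k" and "\<forall>w\<in>V G2. enat (outdeg G2 w) \<le> k"
  shows "\<forall>v\<in>V G. enat (outdeg G v) \<le> k"
  using assms outdeg_glue_left outdeg_glue_right by fastforce

end

lemma vcomp_graph_skeleton:
  assumes "vcomp_graph G1 G2 G"
  shows "V G = V G1 \<union> (\<lambda>w. w + freshn (V G1)) ` (V G2 - inputs G2)"
    and "E G = E G1 \<union> (\<lambda>e. e + freshn (E G1)) ` E G2"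
    and "\<forall>e\<in>E G1. src G e = src G1 e"
    and "\<forall>e\<in>E G2. src G (e + freshn (E G1)) = src G2 e + freshn (V G1)"
  using assms unfolding vcomp_graph_def Let_def by simp_all

lemma typebound_vcomp_graph:
  assumes wf1: "wf_graph (fst x1)" and "typebound k x1" "typebound k x2"
    and vc: "vcomp_graph (fst x1) (fst x2) (fst y)"
  shows "typebound k y"
proof -
  have "V (fst y) \<subseteq> V (fst x1) \<union> (\<lambda>w. w + freshn (V (fst x1))) ` V (fst x2)"
    unfolding vcomp_graph_skeleton(1)[OF vc] by blast
  then show ?thesis
    using assms typebound_glue[OF wf_graph_finite_V[OF wf1] wf_graph_src_in_V[OF wf1]
        vcomp_graph_skeleton(2-4)[OF vc]]
    unfolding typebound_def by blast
qed

lemma hcomp_graph_skeleton: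
  "V (hcomp_graph G1 G2) = V G1 \<union> (\<lambda>w. w + freshn (V G1)) ` V G2"
  "E (hcomp_graph G1 G2) = E G1 \<union> (\<lambda>e. e + freshn (E G1)) ` E G2"
  "src (hcomp_graph G1 G2) = (\<lambda>e. if e \<in> E G1 then src G1 e
     else if e \<ge> freshn (E G1) \<and> e - freshn (E G1) \<in> E G2 then src G2 (e - freshn (E G1)) + freshn (V G1)
     else 0)"
  by (simp only: hcomp_graph_def Let_def rgraph.simps)+

lemma typebound_hcomp:
  assumes wf1: "wf_graph (fst x1)" and "typebound k x1" "typebound k x2"
  shows "typebound k (hcomp x1 x2)"
proof -
  let ?G = "hcomp_graph (fst x1) (fst x2)"
  have "e + freshn (E (fst x1)) \<notin> E (fst x1)" for e
    using freshn_gt[OF wf_graph_finite_E[OF wf1]] by fastforce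
  then have "\<forall>e\<in>E (fst x2). src ?G (e + freshn (E (fst x1))) = src (fst x2) e + freshn (V (fst x1))"
    unfolding hcomp_graph_skeleton by simp
  moreover have "\<forall>e\<in>E (fst x1). src ?G e = src (fst x1) e"
    unfolding hcomp_graph_skeleton by simp
  ultimately have "\<forall>v\<in>V ?G. enat (outdeg ?G v) \<le> k"
    using assms typebound_glue[OF wf_graph_finite_V[OF wf1] wf_graph_src_in_V[OF wf1]
        hcomp_graph_skeleton(2)]
    unfolding typebound_def hcomp_graph_skeleton(1) by blast
  then show ?thesis unfolding typebound_def hcomp_def by simp
qed


subsection \<open>Expansion preserves vertex types\<close>

lemma expand_graph_skeleton:
  "V (expand_graph G h0 l) = (V G - {dv G h0}) \<union> {freshn (V G), Suc (freshn (V G))}"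
  "E (expand_graph G h0 l) = insert (freshn (E G)) (E G)"
  "src (expand_graph G h0 l) = (\<lambda>e. if e = freshn (E G) then freshn (V G) else if e \<in> E G then
       (if src G e = dv G h0 then (if (e, True) \<in> {(rot G ^^ i) h0 | i. i < l} then freshn (V G)
        else Suc (freshn (V G))) else src G e) else 0)"
  by (simp only: expand_graph_def Let_def rgraph.simps)+

lemma outdeg_expand_graph_old:
  assumes wf: "wf_graph G" and "w \<in> V G" "w \<noteq> dv G h0"
  shows "outdeg (expand_graph G h0 l) w = outdeg G w"
proof -
  have "w \<noteq> freshn (V G)" "w \<noteq> Suc (freshn (V G))"
    using assms freshn_gt[OF wf_graph_finite_V[OF wf]] by fastforce+
  moreover have "freshn (E G) \<notin> E G" using freshn_notin[OF wf_graph_finite_E[OF wf]] .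
  ultimately have "{e \<in> E (expand_graph G h0 l). src (expand_graph G h0 l) e = w} = {e \<in> E G. src G e = w}"
    using assms unfolding expand_graph_skeleton by auto
  then show ?thesis unfolding outdeg_def by simp
qed

lemma outdeg_expand_graph_new:
  assumes wf: "wf_graph G"
  shows "outdeg (expand_graph G h0 l) (freshn (V G)) + outdeg (expand_graph G h0 l) (Suc (freshn (V G)))
           = Suc (outdeg G (dv G h0))"
    and "outdeg (expand_graph G h0 l) (freshn (V G)) \<noteq> 0"
proof -
  let ?G' = "expand_graph G h0 l" and ?a = "freshn (V G)" and ?e0 = "freshn (E G)"
  define Sv where "Sv = {e \<in> E G. src G e = dv G h0}"
  define Sa where "Sa = {e \<in> Sv. (e, True) \<in> {(rot G ^^ i) h0 | i. i < l}}"
  have fin: "finite Sv" using wf_graph_finite_E[OF wf] unfolding Sv_def by simp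
  have src_old: "src G e \<noteq> ?a" "src G e \<noteq> Suc ?a" if "e \<in> E G" for e
    using that wf_graph_src_in_V[OF wf] freshn_gt[OF wf_graph_finite_V[OF wf]] by fastforce+
  have e0: "?e0 \<notin> E G" using freshn_notin[OF wf_graph_finite_E[OF wf]] .
  have "{e \<in> E ?G'. src ?G' e = ?a} = insert ?e0 Sa"
    using src_old e0 unfolding expand_graph_skeleton Sa_def Sv_def by auto
  moreover have "finite Sa" using fin unfolding Sa_def by simp
  moreover have "?e0 \<notin> Sa" using e0 unfolding Sa_def Sv_def by simp
  ultimately have a: "outdeg ?G' ?a = Suc (card Sa)" unfolding outdeg_def by simp
  have "{e \<in> E ?G'. src ?G' e = Suc ?a} = Sv - Sa"
    using src_old e0 unfolding expand_graph_skeleton Sa_def Sv_def by auto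
  then have b: "outdeg ?G' (Suc ?a) = card Sv - card Sa"
    using fin unfolding outdeg_def Sa_def by (simp add: card_Diff_subset)
  have "card Sa \<le> card Sv" using fin unfolding Sa_def by (intro card_mono) auto
  then show "outdeg ?G' ?a + outdeg ?G' (Suc ?a) = Suc (outdeg G (dv G h0))"
    using a b unfolding outdeg_def Sv_def by simp
  show "outdeg ?G' ?a \<noteq> 0" using a by simp
qed

lemma outdeg_expand_graph_head:
  assumes wf: "wf_graph G" and adm: "admissible_exp d G Or h0 l" and v: "outdeg G (dv G h0) \<noteq> 0"
  shows "outdeg (expand_graph G h0 l) (Suc (freshn (V G))) \<noteq> 0"
proof
  let ?G' = "expand_graph G h0 l" and ?b = "Suc (freshn (V G))"
  assume b: "outdeg ?G' ?b = 0"
  have "w \<in> inputs ?G'" if "w \<in> inputs G" for w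
  proof -
    have "w \<in> V G" "w \<noteq> dv G h0" "outdeg G w = 0" using that v unfolding inputs_def by auto
    then show ?thesis
      using outdeg_expand_graph_old[OF wf, of w h0 l] unfolding inputs_def expand_graph_skeleton by simp
  qed
  then have "inputs G \<subseteq> inputs ?G'" by blast
  moreover have "?b \<in> inputs ?G'" using b unfolding inputs_def expand_graph_skeleton by simp
  moreover have "?b \<notin> inputs G"
    using freshn_gt[OF wf_graph_finite_V[OF wf]] unfolding inputs_def by fastforce
  moreover have "finite (inputs ?G')"
    using wf_graph_finite_V[OF wf] unfolding inputs_def expand_graph_skeleton by simp
  ultimately have "card (inputs G) < card (inputs ?G')"
    by (metis card_mono card_seteq not_le psubsetI subset_insertI2 insert_subset)
  then show False using adm unfolding admissible_exp_def by simp
qed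

lemma typebound_expand_graph:
  assumes wf: "wf_graph G" and tb: "typebound k (G, Or)" and "1 \<le> k"
    and h0: "h0 \<in> darts G" and adm: "admissible_exp d G Or h0 l"
  shows "typebound k (expand_graph G h0 l, Or')"
proof -
  let ?G' = "expand_graph G h0 l" and ?v = "dv G h0" and ?a = "freshn (V G)"
  have new: "outdeg ?G' w \<le> max 1 (outdeg G ?v)" if "w = ?a \<or> w = Suc ?a" for w
    using that outdeg_expand_graph_new[OF wf, of h0 l] outdeg_expand_graph_head[OF wf adm]
    by (cases "outdeg G ?v = 0") auto
  have bound: "enat (outdeg G w) \<le> k" if "w \<in> V G" for w
    using tb that unfolding typebound_def by simp
  have "enat (outdeg ?G' w) \<le> k" if w: "w \<in> V ?G'" for w
  proof (cases "w \<in> V G \<and> w \<noteq> ?v")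
    case True
    then show ?thesis using bound outdeg_expand_graph_old[OF wf] by simp
  next
    case False
    then have "enat (outdeg ?G' w) \<le> max 1 (enat (outdeg G ?v))"
      using new w unfolding expand_graph_skeleton by (auto simp: one_enat_def)
    then show ?thesis using bound[OF dv_in_V[OF wf h0]] \<open>1 \<le> k\<close> by (meson max.boundedI order.trans)
  qed
  then show ?thesis unfolding typebound_def by simp
qed


lemma typebound_relabel: "typebound k (relabel \<sigma> \<tau> x) = typebound k x"
  by (simp add: relabel_def typebound_def outdeg_def)

lemma wf_og_relabel:
  assumes wf: "wf_og d x"
    and \<sigma>: "bij_betw \<sigma> {..<card (inputs (fst x))} {..<card (inputs (fst x))}"
    and \<tau>: "bij_betw \<tau> {..<card (bcs (fst x))} {..<card (bcs (fst x))}"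
  shows "wf_og d (relabel \<sigma> \<tau> x)"
proof -
  obtain G Or where x: "x = (G, Or)" by fastforce
  let ?G' = "fst (relabel \<sigma> \<tau> x)"
  have same: "V ?G' = V G" "E ?G' = E G" "src ?G' = src G" "tgt ?G' = tgt G" "rot ?G' = rot G"
    by (simp_all add: relabel_def x)
  then have incidence: "outdeg ?G' = outdeg G" "indeg ?G' = indeg G" "darts ?G' = darts G"
      "dv ?G' = dv G" "bphi ?G' = bphi G"
    by (simp add: darts_def | intro ext; simp add: outdeg_def indeg_def dv_def bphi_def)+
  with same incidence have derived: "inputs ?G' = inputs G" "bcs ?G' = bcs G" "ogens ?G' = ogens G"
    by (simp_all add: inputs_def bcs_def ogens_def)
  have wfG: "wf_graph G" and "wf_or G Or" using wf unfolding x wf_og_def by auto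
  have "bij_betw (\<sigma> \<circ> inp G) (inputs G) {..<card (inputs G)}"
    using wfG \<sigma> unfolding wf_graph_def x by (auto intro: bij_betw_trans)
  then have inp: "bij_betw (inp ?G') (inputs G) {..<card (inputs G)}"
    by (rule bij_betw_cong[THEN iffD1, rotated]) (simp add: relabel_def x)
  have "bij_betw (\<tau> \<circ> outp G) (bcs G) {..<card (bcs G)}"
    using wfG \<tau> unfolding wf_graph_def x by (auto intro: bij_betw_trans)
  then have outp: "bij_betw (outp ?G') (bcs G) {..<card (bcs G)}"
    by (rule bij_betw_cong[THEN iffD1, rotated]) (simp add: relabel_def x)
  have "wf_graph ?G'"
    using wfG inp outp unfolding wf_graph_def incidence derived same by (simp add: relabel_def x)
  moreover have "wf_or ?G' (snd (relabel \<sigma> \<tau> x))"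
    using \<open>wf_or G Or\<close> unfolding wf_or_def derived by (simp add: relabel_def x)
  ultimately show ?thesis unfolding wf_og_def by simp
qed

lemma wf_og_idgraph: "wf_og d idgraph"
proof -
  let ?G = "fst idgraph"
  have outdeg: "outdeg ?G = (\<lambda>_. 0)" "indeg ?G = (\<lambda>_. 0)"
    by (simp_all add: idgraph_def outdeg_def indeg_def fun_eq_iff)
  have darts: "darts ?G = {}" by (simp add: idgraph_def darts_def)
  have "inputs ?G = {0}" "bcs ?G = {Iso 0}" "ogens ?G = {}"
    unfolding inputs_def bcs_def ogens_def outdeg darts by (simp_all add: idgraph_def)
  then show ?thesis
    unfolding wf_og_def wf_graph_def wf_or_def outdeg darts
    by (simp add: idgraph_def bij_betw_def lessThan_Suc)
qed

lemma typebound_idgraph: "typebound k idgraph"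
  by (simp add: typebound_def idgraph_def outdeg_def zero_enat_def[symmetric])


subsection \<open>Membership in \<open>DG_k\<close>\<close>

lemma DGk_mono: "k \<le> k' \<Longrightarrow> DGk d k \<subseteq> DGk d k'"
  unfolding DGk_def typebound_def by (rule lin_span_mono) (auto intro: order_trans)

lemma delta_in_DGk: "wf_og d x \<Longrightarrow> typebound k x \<Longrightarrow> delta x \<in> DGk d k"
  unfolding DGk_def by (rule lin_span_base) blast

lemma dbasis_in_DGk:
  assumes wf: "wf_og d x" and tb: "typebound k x" and "1 \<le> k"
  shows "dbasis d x \<in> DGk d k"
proof -
  obtain G Or where x: "x = (G, Or)" by fastforce
  have wfG: "wf_graph G" using wf unfolding x wf_og_def by simp
  define P where "P = {(h0, l). h0 \<in> darts G \<and> l \<le> card (vdarts G (dv G h0))}"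
  have fin_darts: "finite (darts G)" using wf_graph_finite_E[OF wfG] unfolding darts_def by simp
  have "card (vdarts G v) \<le> card (darts G)" for v
    using fin_darts by (intro card_mono) (auto simp: vdarts_def)
  then have "P \<subseteq> darts G \<times> {..card (darts G)}" unfolding P_def by (auto intro: order_trans)
  then have "finite P" using fin_darts finite_subset by blast
  define expansion :: "dart \<times> nat \<Rightarrow> ograph \<Rightarrow> 'a" where
    "expansion p = (if admissible_exp d G Or (fst p) (snd p)
       then delta (expand_graph G (fst p) (snd p), expand_or G Or (fst p) (snd p)) else (\<lambda>_. 0))" for p
  have "dbasis d x = (\<lambda>y. \<Sum>p\<in>P. (-1) ^ expand_sign_exp d G Or (dv G (fst p)) * expansion p y)"
    unfolding dbasis_def x fst_conv snd_conv P_def expansion_def by (rule ext, rule sum.cong) auto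
  also have "\<dots> \<in> DGk d k"
    unfolding DGk_def
  proof (rule lin_span_sum[OF \<open>finite P\<close>], rule ballI)
    fix p assume p: "p \<in> P"
    show "expansion p \<in> lin_span ({delta x |x. wf_og d x \<and> typebound k x} \<union> Rel d)"
    proof (cases "admissible_exp d G Or (fst p) (snd p)")
      case True
      have "fst p \<in> darts G" using p unfolding P_def by auto
      then have "typebound k (expand_graph G (fst p) (snd p), expand_or G Or (fst p) (snd p))"
        using typebound_expand_graph[OF wfG tb[unfolded x] \<open>1 \<le> k\<close> _ True] by blast
      moreover have "wf_og d (expand_graph G (fst p) (snd p), expand_or G Or (fst p) (snd p))"
        using True unfolding admissible_exp_def by simp
      ultimately show ?thesis
        using True delta_in_DGk[unfolded DGk_def] unfolding expansion_def by simp
    qed (simp add: expansion_def lin_span_zero)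
  qed
  finally show ?thesis .
qed

lemma giso_outdeg:
  assumes wf: "wf_graph G" and iso: "giso G G' fv fe" and v: "v \<in> V G"
  shows "outdeg G' (fv v) = outdeg G v"
proof -
  have bv: "bij_betw fv (V G) (V G')" and be: "bij_betw fe (E G) (E G')"
    and src: "\<forall>e\<in>E G. src G' (fe e) = fv (src G e)"
    using iso unfolding giso_def by auto
  have "src G e = v" if "e \<in> E G" "fv (src G e) = fv v" for e
    using that v wf_graph_src_in_V[OF wf] bij_betw_imp_inj_on[OF bv] by (auto dest: inj_onD)
  then have "{e' \<in> E G'. src G' e' = fv v} = fe ` {e \<in> E G. src G e = v}"
    using src bij_betw_imp_surj_on[OF be, symmetric] by auto
  moreover have "inj_on fe {e \<in> E G. src G e = v}"
    using bij_betw_imp_inj_on[OF be] by (rule inj_on_subset) auto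
  ultimately show ?thesis unfolding outdeg_def by (simp add: card_image)
qed

lemma wf_or_giso:
  assumes wf: "wf_graph G" and iso: "giso G G' fv fe" and "wf_or G Or"
  shows "wf_or G' (map (gmap fv fe) Or)"
proof -
  have bv: "bij_betw fv (V G) (V G')" and be: "bij_betw fe (E G) (E G')"
    using iso unfolding giso_def by auto
  have "inj_on (gmap fv fe) (ogens G)"
    using bij_betw_imp_inj_on[OF bv] bij_betw_imp_inj_on[OF be]
    unfolding ogens_def gmap_def by (auto intro!: inj_onI dest: inj_onD)
  moreover have "{w \<in> V G'. outdeg G' w \<noteq> 0} = fv ` {v \<in> V G. outdeg G v \<noteq> 0}"
    using giso_outdeg[OF wf iso] bij_betw_imp_surj_on[OF bv, symmetric] by auto
  then have "gmap fv fe ` ogens G = ogens G'"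
    using bij_betw_imp_surj_on[OF be, symmetric] unfolding ogens_def gmap_def
    by (simp add: image_Un image_image)
  ultimately show ?thesis using \<open>wf_or G Or\<close> unfolding wf_or_def by (simp add: distinct_map)
qed

lemma DGk_generator_support:
  assumes "g \<in> {delta x | x. wf_og d x \<and> typebound k x} \<union> Rel d"
  shows "finite {y. g y \<noteq> 0} \<and> (\<forall>y. g y \<noteq> 0 \<longrightarrow> wf_og d y)"
proof -
  consider (basis) x where "g = delta x" "wf_og d x"
    | (sign) G Or Or' where "g = (\<lambda>y. delta (G, Or') y - (-1) ^ kinv d G Or Or' * delta (G, Or) y)"
        "wf_og d (G, Or)" "wf_or G Or'"
    | (iso) G G' Or fv fe where "g = (\<lambda>y. delta (G', map (gmap fv fe) Or) y - delta (G, Or) y)"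
        "wf_og d (G, Or)" "wf_graph G'" "giso G G' fv fe"
    using assms unfolding Rel_def by blast
  then show ?thesis
  proof cases
    case basis
    then have "g y \<noteq> 0 \<longleftrightarrow> y = x" for y by (simp add: delta_def)
    then show ?thesis using basis(2) by simp
  next
    case sign
    then have "{y. g y \<noteq> 0} \<subseteq> {(G, Or'), (G, Or)}" by (auto simp: delta_def)
    moreover have "wf_og d (G, Or')" using sign unfolding wf_og_def by simp
    ultimately show ?thesis using sign finite_subset by blast
  next
    case iso
    then have "{y. g y \<noteq> 0} \<subseteq> {(G', map (gmap fv fe) Or), (G, Or)}" by (auto simp: delta_def)
    moreover have "wf_og d (G', map (gmap fv fe) Or)"
      using iso wf_or_giso unfolding wf_og_def by auto
    ultimately show ?thesis using iso finite_subset by blast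
  qed
qed

lemma DGk_support:
  assumes "f \<in> DGk d k"
  shows "finite {y. f y \<noteq> 0}" and "f y \<noteq> 0 \<Longrightarrow> wf_og d y"
proof -
  obtain T c where T: "finite T" "T \<subseteq> {delta x | x. wf_og d x \<and> typebound k x} \<union> Rel d"
    and f: "f = (\<lambda>y. \<Sum>g\<in>T. c g * g y)"
    using assms unfolding DGk_def lin_span_def by blast
  have generators: "finite {y. g y \<noteq> 0} \<and> (\<forall>y. g y \<noteq> 0 \<longrightarrow> wf_og d y)" if "g \<in> T" for g
    using that T(2) by (intro DGk_generator_support) blast
  have support: "{y. f y \<noteq> 0} \<subseteq> (\<Union>g\<in>T. {y. g y \<noteq> 0})"
  proof
    fix y assume "y \<in> {y. f y \<noteq> 0}"
    then have "(\<Sum>g\<in>T. c g * g y) \<noteq> 0" unfolding f by simp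
    then obtain g where "g \<in> T" "c g * g y \<noteq> 0" by (meson sum.neutral)
    then show "y \<in> (\<Union>g\<in>T. {y. g y \<noteq> 0})" by auto
  qed
  show "finite {y. f y \<noteq> 0}"
    using T(1) generators by (intro finite_subset[OF support] finite_UN_I) auto
  show "f y \<noteq> 0 \<Longrightarrow> wf_og d y" using support generators by blast
qed

lemma DGk_of_finite_support:
  assumes fin: "finite {y. f y \<noteq> 0}" and supp: "\<forall>y. f y \<noteq> 0 \<longrightarrow> wf_og d y \<and> typebound k y"
  shows "f \<in> DGk d k"
proof -
  let ?Y = "{y. f y \<noteq> 0}"
  have "f z * delta z y = (if y = z then f z else 0)" for z y by (simp add: delta_def)
  then have "(\<Sum>z\<in>?Y. f z * delta z y) = (if y \<in> ?Y then f y else 0)" for y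
    using fin by (simp add: sum.delta')
  then have "f = (\<lambda>y. \<Sum>z\<in>?Y. f z * delta z y)" by auto
  also have "\<dots> \<in> DGk d k"
    using supp delta_in_DGk unfolding DGk_def by (intro lin_span_sum[OF fin]) blast
  finally show ?thesis .
qed

lemma vcomp_nonzero_iff:
  "(vcomp x1 x2 y :: 'a::field) \<noteq> 0 \<longleftrightarrow> vcomp_graph (fst x1) (fst x2) (fst y) \<and>
     snd y = snd x1 @ map (shgen (freshn (V (fst x1))) (freshn (E (fst x1)))) (snd x2)"
  by (simp add: vcomp_def)

text \<open>In the theorem the hypotheses of the composition clauses are typed independently of
  their conclusions, so the coefficient fields may differ; only the support matters.\<close>

lemma vcomp_in_DGk:
  assumes "wf_graph (fst x1)" "typebound k x1" "typebound k x2"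
    and vc: "(vcomp x1 x2 :: ograph \<Rightarrow> 'b::field) \<in> DGk d k'"
  shows "(vcomp x1 x2 :: ograph \<Rightarrow> 'a::field) \<in> DGk d k"
proof (rule DGk_of_finite_support)
  have "{y. (vcomp x1 x2 y :: 'a) \<noteq> 0} = {y. (vcomp x1 x2 y :: 'b) \<noteq> 0}"
    unfolding vcomp_nonzero_iff ..
  then show "finite {y. (vcomp x1 x2 y :: 'a) \<noteq> 0}" using DGk_support(1)[OF vc] by simp
  show "\<forall>y. (vcomp x1 x2 y :: 'a) \<noteq> 0 \<longrightarrow> wf_og d y \<and> typebound k y"
    using DGk_support(2)[OF vc] typebound_vcomp_graph[OF assms(1-3)]
    unfolding vcomp_nonzero_iff by blast
qed

lemma hcomp_in_DGk:
  assumes "wf_graph (fst x1)" "typebound k x1" "typebound k x2"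
    and hc: "(delta (hcomp x1 x2) :: ograph \<Rightarrow> 'b::field) \<in> DGk d k'"
  shows "(delta (hcomp x1 x2) :: ograph \<Rightarrow> 'a::field) \<in> DGk d k"
proof (rule delta_in_DGk)
  show "wf_og d (hcomp x1 x2)" using DGk_support(2)[OF hc] by (simp add: delta_def)
  show "typebound k (hcomp x1 x2)" using typebound_hcomp[OF assms(1-3)] .
qed

theorem mainTheorem2:
  fixes d :: int
  shows "(\<forall>k::nat. 1 \<le> k \<longrightarrow>
            (DGk d (enat k) :: (ograph \<Rightarrow> 'k::field) set) \<subseteq> DGk d (enat (Suc k)) \<and>
            (DGk d (enat k) :: (ograph \<Rightarrow> 'k::field) set) \<subseteq> DGk d \<infinity>) \<and>
         (\<forall>k::enat. 1 \<le> k \<longrightarrow>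
            (\<forall>x. wf_og d x \<and> typebound k x \<longrightarrow>
                 (dbasis d x :: ograph \<Rightarrow> 'k::field) \<in> DGk d k \<and>
                 (\<forall>\<sigma> \<tau>. bij_betw \<sigma> {..<card (inputs (fst x))} {..<card (inputs (fst x))} \<and>
                        bij_betw \<tau> {..<card (bcs (fst x))} {..<card (bcs (fst x))} \<longrightarrow>
                        (delta (relabel \<sigma> \<tau> x) :: ograph \<Rightarrow> 'k::field) \<in> DGk d k)) \<and>
            (\<forall>x1 x2. wf_og d x1 \<and> typebound k x1 \<and> wf_og d x2 \<and> typebound k x2 \<longrightarrow>
                 ((vcomp x1 x2 :: ograph \<Rightarrow> 'k::field) \<in> DGk d \<infinity> \<longrightarrow> vcomp x1 x2 \<in> DGk d k) \<and>
                 ((delta (hcomp x1 x2) :: ograph \<Rightarrow> 'k::field) \<in> DGk d \<infinity> \<longrightarrow>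
                    delta (hcomp x1 x2) \<in> DGk d k)) \<and>
            (delta idgraph :: ograph \<Rightarrow> 'k::field) \<in> DGk d k)"
proof (intro conjI allI impI)
  fix k :: nat
  show "DGk d (enat k) \<subseteq> DGk d (enat (Suc k))" "DGk d (enat k) \<subseteq> DGk d \<infinity>"
    by (simp_all add: DGk_mono)
next
  fix k :: enat and x :: ograph and \<sigma> \<tau> :: "nat \<Rightarrow> nat"
  assume "1 \<le> k" and x: "wf_og d x \<and> typebound k x"
  then show "dbasis d x \<in> DGk d k" by (simp add: dbasis_in_DGk)
  assume "bij_betw \<sigma> {..<card (inputs (fst x))} {..<card (inputs (fst x))} \<and>
    bij_betw \<tau> {..<card (bcs (fst x))} {..<card (bcs (fst x))}"
  then show "delta (relabel \<sigma> \<tau> x) \<in> DGk d k"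
    using x by (simp add: delta_in_DGk wf_og_relabel typebound_relabel)
next
  fix k :: enat and x1 x2 :: ograph
  assume "wf_og d x1 \<and> typebound k x1 \<and> wf_og d x2 \<and> typebound k x2"
  then have factors: "wf_graph (fst x1)" "typebound k x1" "typebound k x2"
    by (simp_all add: wf_og_def)
  show "(vcomp x1 x2 :: ograph \<Rightarrow> 'k) \<in> DGk d \<infinity> \<Longrightarrow> vcomp x1 x2 \<in> DGk d k"
    using factors by (rule vcomp_in_DGk)
  show "(delta (hcomp x1 x2) :: ograph \<Rightarrow> 'k) \<in> DGk d \<infinity> \<Longrightarrow> delta (hcomp x1 x2) \<in> DGk d k"
    using factors by (rule hcomp_in_DGk)
next
  show "delta idgraph \<in> DGk d k" for k
    by (simp add: delta_in_DGk wf_og_idgraph typebound_idgraph)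
qed

end
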